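(* Let $1\leq\ell<d\leq k-1$ be integers with $k-\ell$ not dividing $k$. Then $\delta_d^{\mathrm{hf}}(k,\ell)=\delta_d^{\mathrm{frct}}(k,\ell)$.
   Context: A $k$-graph $G$ has vertex set $V(G)$ and edges that are $k$-subsets. For $0\le\ell<k$, a ($k$-uniform) $\ell$-cycle is a $k$-graph whose vertices can be cyclically ordered so that every edge consists of $k$ cyclically consecutive vertices and consecutive edges intersect in exactly $\ell$ vertices. For $1\le d<k$, $\delta_d(G)$ is the largest $m$ such that every $d$-set lies in at least $m$ edges. A homomorphism $F\to G$ is a vertex map sending edges to edges; a perfect fractional $\ell$-cycle tiling of $G$ is a weighting $\omega(\phi)\in[0,1]$ of homomorphisms $\phi$ from $k$-uniform $\ell$-cycles into $G$ (finitely many nonzero) with $\sum_\phi\omega(\phi)|\phi^{-1}(v)|=1$ for all $v$. The $\ell$-line graph of $G$ has vertex set $E(G)$ with $e\sim f$ iff $|e\cap f|\ge\ell$; a subgraph is $\ell$-connected if it has no isolated vertices and its edges induce a connected subgraph of the $\ell$-line graph; an $\ell$-component is an edge-maximal $\ell$-connected subgraph. A family $\mathcal{G}$ of $k$-graphs admits a Hamilton $\ell$-framework if for every $G\in\mathcal{G}$ there is a spanning subgraph $F(G)\subseteq G$ such that (F1) $F(G)$ is an $\ell$-component of $G$; (F2) $F(G)$ has a perfect fractional $\ell$-cycle tiling; (F3) $F(H-x)\cup F(H-y)$ is $\ell$-connected for every $k$-graph $H$ and $x,y\in V(H)$ with $H-x,H-y\in\mathcal{G}$. The threshold $\delta_d^{\mathrm{hf}}(k,\ell)$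 is the infimum of $\delta\in[0,1]$ such that for every $\varepsilon>0$ there is $n_0$ such that the family of all $k$-graphs $G$ on $n\ge n_0$ vertices, $n$ divisible by $k-\ell$, with $\delta_d(G)\ge(\delta+\varepsilon)\binom{n-d}{k-d}$ admits a Hamilton $\ell$-framework. The threshold $\delta_d^{\mathrm{frct}}(k,\ell)$ is the infimum of $\delta\in[0,1]$ such that for every $\varepsilon>0$ there is $n_0$ such that every $k$-graph on $n\ge n_0$ vertices with $\delta_d(G)\ge(\delta+\varepsilon)\binom{n-d}{k-d}$ has a perfect fractional $\ell$-cycle tiling. *)

theory Defs
  imports Complex_Main
begin

type_synonym 'a hgraph = "'a set \<times> 'a set set"

definition kgraph :: "nat \<Rightarrow> 'a hgraph \<Rightarrow> bool" where
  "kgraph k G \<longleftrightarrow> finite (fst G) \<and> (\<forall>e\<in>snd G. e \<subseteq> fst G \<and> card e = k)"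

definition min_codeg_ge :: "nat \<Rightarrow> 'a hgraph \<Rightarrow> real \<Rightarrow> bool" where
  "min_codeg_ge d G x \<longleftrightarrow>
     (\<forall>S. S \<subseteq> fst G \<and> card S = d \<longrightarrow> real (card {e \<in> snd G. S \<subseteq> e}) \<ge> x)"

text \<open>The canonical l-cycle with m edges: vertex set {0..<m(k-l)}, i-th edge consists of the
  k cyclically consecutive vertices starting at i(k-l).\<close>
definition cyc_edge :: "nat \<Rightarrow> nat \<Rightarrow> nat \<Rightarrow> nat \<Rightarrow> nat set" where
  "cyc_edge k l m i = {(i * (k - l) + j) mod (m * (k - l)) | j. j < k}"

text \<open>m is an admissible number of edges: the canonical structure really is a k-uniform
  l-cycle (edges are k-sets, cyclically consecutive edges meet in exactly l vertices).\<close>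
definition cyc_ok :: "nat \<Rightarrow> nat \<Rightarrow> nat \<Rightarrow> bool" where
  "cyc_ok k l m \<longleftrightarrow> 2 \<le> m \<and>
     (\<forall>i<m. card (cyc_edge k l m i) = k \<and>
            card (cyc_edge k l m i \<inter> cyc_edge k l m (Suc i mod m)) = l)"

text \<open>A homomorphism from the canonical l-cycle with m edges into G, given as the list of images
  of the vertices 0, ..., m(k-l)-1.\<close>
definition cyc_hom :: "nat \<Rightarrow> nat \<Rightarrow> 'a hgraph \<Rightarrow> nat \<times> 'a list \<Rightarrow> bool" where
  "cyc_hom k l G \<phi> \<longleftrightarrow> (case \<phi> of (m, xs) \<Rightarrow>
      cyc_ok k l m \<and> length xs = m * (k - l) \<and> set xs \<subseteq> fst G \<and>
      (\<forall>i<m. (\<lambda>j. xs ! j) ` cyc_edge k l m i \<in> snd G))"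

definition preimage_size :: "nat \<times> 'a list \<Rightarrow> 'a \<Rightarrow> nat" where
  "preimage_size \<phi> v = card {j. j < length (snd \<phi>) \<and> snd \<phi> ! j = v}"

definition perfect_frac_tiling :: "nat \<Rightarrow> nat \<Rightarrow> 'a hgraph \<Rightarrow> bool" where
  "perfect_frac_tiling k l G \<longleftrightarrow>
     (\<exists>\<omega> :: nat \<times> 'a list \<Rightarrow> real.
        finite {\<phi>. \<omega> \<phi> \<noteq> 0} \<and>
        (\<forall>\<phi>. \<omega> \<phi> \<noteq> 0 \<longrightarrow> cyc_hom k l G \<phi>) \<and>
        (\<forall>\<phi>. 0 \<le> \<omega> \<phi> \<and> \<omega> \<phi> \<le> 1) \<and>
        (\<forall>v\<in>fst G. (\<Sum>\<phi>\<in>{\<phi>. \<omega> \<phi> \<noteq> 0}. \<omega> \<phi> * real (preimage_size \<phi> v)) = 1))"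

definition subgraph :: "'a hgraph \<Rightarrow> 'a hgraph \<Rightarrow> bool" where
  "subgraph H G \<longleftrightarrow> fst H \<subseteq> fst G \<and> snd H \<subseteq> snd G \<and> (\<forall>e\<in>snd H. e \<subseteq> fst H)"

definition line_adj :: "nat \<Rightarrow> 'a set set \<Rightarrow> ('a set \<times> 'a set) set" where
  "line_adj l E = {(e, f). e \<in> E \<and> f \<in> E \<and> card (e \<inter> f) \<ge> l}"

definition ell_connected :: "nat \<Rightarrow> 'a hgraph \<Rightarrow> bool" where
  "ell_connected l H \<longleftrightarrow>
     (\<forall>v\<in>fst H. \<exists>e\<in>snd H. v \<in> e) \<and>
     (\<forall>e\<in>snd H. \<forall>f\<in>snd H. (e, f) \<in> (line_adj l (snd H))\<^sup>*)"

definition ell_component :: "nat \<Rightarrow> 'a hgraph \<Rightarrow> 'a hgraph \<Rightarrow> bool" where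
  "ell_component l H G \<longleftrightarrow> subgraph H G \<and> ell_connected l H \<and>
     (\<forall>H'. subgraph H' G \<and> ell_connected l H' \<and> snd H \<subseteq> snd H' \<longrightarrow> snd H' = snd H)"

definition delete_vertex :: "'a hgraph \<Rightarrow> 'a \<Rightarrow> 'a hgraph" where
  "delete_vertex G x = (fst G - {x}, {e \<in> snd G. x \<notin> e})"

definition graph_union :: "'a hgraph \<Rightarrow> 'a hgraph \<Rightarrow> 'a hgraph" where
  "graph_union G H = (fst G \<union> fst H, snd G \<union> snd H)"

definition hamilton_framework :: "nat \<Rightarrow> nat \<Rightarrow> 'a hgraph set \<Rightarrow> bool" where
  "hamilton_framework k l \<G> \<longleftrightarrow>
     (\<exists>F :: 'a hgraph \<Rightarrow> 'a hgraph.
        (\<forall>G\<in>\<G>. fst (F G) = fst G \<and> snd (F G) \<subseteq> snd G \<and>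
                 ell_component l (F G) G \<and> perfect_frac_tiling k l (F G)) \<and>
        (\<forall>H x y. kgraph k H \<and> x \<in> fst H \<and> y \<in> fst H \<and>
                 delete_vertex H x \<in> \<G> \<and> delete_vertex H y \<in> \<G> \<longrightarrow>
                 ell_connected l (graph_union (F (delete_vertex H x)) (F (delete_vertex H y)))))"

definition hf_family :: "nat \<Rightarrow> nat \<Rightarrow> nat \<Rightarrow> real \<Rightarrow> nat \<Rightarrow> nat hgraph set" where
  "hf_family d k l \<delta> n0 = {G. kgraph k G \<and> card (fst G) \<ge> n0 \<and> (k - l) dvd card (fst G) \<and>
      min_codeg_ge d G (\<delta> * real (card (fst G) - d choose (k - d)))}"

definition delta_hf :: "nat \<Rightarrow> nat \<Rightarrow> nat \<Rightarrow> real" where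
  "delta_hf d k l = Inf {\<delta>. 0 \<le> \<delta> \<and> \<delta> \<le> 1 \<and>
     (\<forall>\<epsilon>>0. \<exists>n0. hamilton_framework k l (hf_family d k l (\<delta> + \<epsilon>) n0))}"

definition delta_frct :: "nat \<Rightarrow> nat \<Rightarrow> nat \<Rightarrow> real" where
  "delta_frct d k l = Inf {\<delta>. 0 \<le> \<delta> \<and> \<delta> \<le> 1 \<and>
     (\<forall>\<epsilon>>0. \<exists>n0. \<forall>G :: nat hgraph. kgraph k G \<and> card (fst G) \<ge> n0 \<and>
        min_codeg_ge d G ((\<delta> + \<epsilon>) * real (card (fst G) - d choose (k - d))) \<longrightarrow>
        perfect_frac_tiling k l G)}"

end

theory Submission
  imports Defs
begin

(* If every d-set lies in an edge and l < d, then any two edges are joined in the l-line graph: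
   an l-subset of one edge is exchanged vertex by vertex for an l-subset of the other, since an
   l-set plus one vertex always lies in an edge.  So every graph of the minimum-codegree family is
   its own l-component, two graphs H - x and H - y have edges through a common d-set, and the
   identity is a Hamilton l-framework as soon as perfect fractional tilings exist; this gives
   delta_hf <= delta_frct.

   Conversely, let G have n vertices and put r = n mod (k - l).  Deleting a set R of r < k vertices
   lowers the codegree of a d-set by at most r * C(n-d-1, k-d-1) <= k^2/(n-d) * C(n-d, k-d), so
   G - R lies in the family with half of the slack epsilon to spare, and its framework subgraph
   has a perfect fractional tiling.  Every vertex avoids the same number C(n-1, r) of sets R, so
   the average of these tilings is a perfect fractional tiling of G; this gives
   delta_frct <= delta_hf. *)

lemma card_supersets_le:
  assumes "finite V" "T \<subseteq> V"
  shows "card {e. e \<subseteq> V \<and> card e = k \<and> T \<subseteq> e} \<le> (card V - card T) choose (k - card T)"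
proof -
  have "finite T" using assms finite_subset by blast
  have "card {e. e \<subseteq> V \<and> card e = k \<and> T \<subseteq> e} \<le> card {B. B \<subseteq> V - T \<and> card B = k - card T}"
  proof (rule card_inj_on_le[where f = "\<lambda>e. e - T"])
    show "inj_on (\<lambda>e. e - T) {e. e \<subseteq> V \<and> card e = k \<and> T \<subseteq> e}"
      by (rule inj_onI) auto
    show "(\<lambda>e. e - T) ` {e. e \<subseteq> V \<and> card e = k \<and> T \<subseteq> e} \<subseteq> {B. B \<subseteq> V - T \<and> card B = k - card T}"
      using \<open>finite T\<close> by (auto simp: card_Diff_subset)
  qed (use assms in simp)
  also have "\<dots> = (card V - card T) choose (k - card T)"
    using assms \<open>finite T\<close> by (simp add: n_subsets card_Diff_subset)
  finally show ?thesis .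
qed

definition delete_set :: "'a hgraph \<Rightarrow> 'a set \<Rightarrow> 'a hgraph" where
  "delete_set G R = (fst G - R, {e \<in> snd G. e \<inter> R = {}})"

lemma kgraph_delete_set: "kgraph k G \<Longrightarrow> kgraph k (delete_set G R)"
  by (auto simp: kgraph_def delete_set_def)

text \<open>Every edge through S that meets R contains S plus one vertex of R.\<close>
lemma codegree_le_codegree_delete_set:
  assumes kg: "kgraph k G" and R: "R \<subseteq> fst G" and S: "S \<subseteq> fst G - R" "card S = d"
  shows "card {e \<in> snd G. S \<subseteq> e}
    \<le> card {e \<in> snd (delete_set G R). S \<subseteq> e} + card R * ((card (fst G) - Suc d) choose (k - Suc d))"
proof -
  let ?V = "fst G" and ?E = "snd G"
  let ?A = "{e \<in> snd (delete_set G R). S \<subseteq> e}"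
  let ?B = "\<lambda>x. {e \<in> ?E. insert x S \<subseteq> e}"
  let ?C = "(card ?V - Suc d) choose (k - Suc d)"
  have fV: "finite ?V" and EV: "\<forall>e\<in>?E. e \<subseteq> ?V \<and> card e = k"
    using kg by (auto simp: kgraph_def)
  have fE: "finite ?E" using fV EV by (meson finite_Pow_iff finite_subset PowI subsetI)
  have fR: "finite R" and fS: "finite S"
    using R S(1) fV by (meson Diff_subset finite_subset order_trans)+
  have "{e \<in> ?E. S \<subseteq> e} \<subseteq> ?A \<union> (\<Union>x\<in>R. ?B x)"
    by (auto simp: delete_set_def)
  then have "card {e \<in> ?E. S \<subseteq> e} \<le> card (?A \<union> (\<Union>x\<in>R. ?B x))"
    by (rule card_mono[rotated]) (use fE fR in \<open>auto simp: delete_set_def\<close>)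
  also have "\<dots> \<le> card ?A + card (\<Union>x\<in>R. ?B x)" by (rule card_Un_le)
  also have "card (\<Union>x\<in>R. ?B x) \<le> (\<Sum>x\<in>R. card (?B x))" by (rule card_UN_le[OF fR])
  also have "\<dots> \<le> (\<Sum>x\<in>R. ?C)"
  proof (rule sum_mono)
    fix x assume x: "x \<in> R"
    have "x \<notin> S" using x S(1) by blast
    then have "card (insert x S) = Suc d" using fS S(2) by simp
    have "card (?B x) \<le> card {e. e \<subseteq> ?V \<and> card e = k \<and> insert x S \<subseteq> e}"
      by (rule card_mono) (use fV EV in auto)
    also have "\<dots> \<le> (card ?V - card (insert x S)) choose (k - card (insert x S))"
      by (rule card_supersets_le) (use fV x R S in auto)
    finally show "card (?B x) \<le> ?C" using \<open>card (insert x S) = Suc d\<close> by simp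
  qed
  finally show ?thesis by simp
qed

lemma binomial_shift_le:
  fixes n d k r :: nat and \<epsilon> :: real
  assumes "d < k" "d < n" "r < k" and big: "2 * real k ^ 2 \<le> \<epsilon> * real (n - d)"
  shows "real r * real ((n - Suc d) choose (k - Suc d)) \<le> \<epsilon> / 2 * real ((n - d) choose (k - d))"
proof -
  define X where "X = real ((n - d) choose (k - d))"
  define Y where "Y = real ((n - Suc d) choose (k - Suc d))"
  have "(n - d) * ((n - Suc d) choose (k - Suc d)) = ((n - d) choose (k - d)) * (k - d)"
    using Suc_times_binomial_eq[of "n - Suc d" "k - Suc d"] assms(1,2) by (simp add: Suc_diff_Suc)
  then have eq: "real (n - d) * Y = real (k - d) * X"
    unfolding X_def Y_def by (metis mult.commute of_nat_mult)
  have "real r * real (k - d) \<le> real k * real k"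
    using assms by (intro mult_mono) auto
  then have le: "real r * real (k - d) \<le> \<epsilon> * real (n - d) / 2"
    using big by (simp add: power2_eq_square)
  have "real (n - d) * (real r * Y) = real r * real (k - d) * X"
    by (simp add: eq mult.left_commute flip: mult.assoc)
  also have "\<dots> \<le> \<epsilon> * real (n - d) / 2 * X"
    using le by (rule mult_right_mono) (simp add: X_def)
  also have "\<dots> = real (n - d) * (\<epsilon> / 2 * X)" by simp
  finally show ?thesis using assms(2) unfolding X_def Y_def by simp
qed

lemma min_codeg_delete_set:
  fixes \<delta> \<epsilon> :: real
  assumes kg: "kgraph k G" and R: "R \<subseteq> fst G" "card R < k"
    and "d < k" "d < card (fst G)" "0 \<le> \<delta>" "0 < \<epsilon>"
    and big: "2 * real k ^ 2 \<le> \<epsilon> * real (card (fst G) - d)"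
    and mc: "min_codeg_ge d G ((\<delta> + \<epsilon>) * real (card (fst G) - d choose (k - d)))"
  shows "min_codeg_ge d (delete_set G R)
           ((\<delta> + \<epsilon> / 2) * real (card (fst (delete_set G R)) - d choose (k - d)))"
  unfolding min_codeg_ge_def
proof (intro allI impI)
  fix S assume S: "S \<subseteq> fst (delete_set G R) \<and> card S = d"
  define n where "n = card (fst G)"
  have "finite R" using R kg finite_subset unfolding kgraph_def by blast
  then have "card (fst (delete_set G R)) = n - card R"
    using R unfolding n_def delete_set_def by (simp add: card_Diff_subset)
  have "(\<delta> + \<epsilon>) * real ((n - d) choose (k - d)) \<le> real (card {e \<in> snd G. S \<subseteq> e})"
    using mc S unfolding min_codeg_ge_def n_def delete_set_def by auto
  also have "\<dots> \<le> real (card {e \<in> snd (delete_set G R). S \<subseteq> e})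
      + real (card R) * real ((n - Suc d) choose (k - Suc d))"
    using codegree_le_codegree_delete_set[OF kg R(1), of S d] S
    unfolding n_def delete_set_def by (simp flip: of_nat_mult of_nat_add)
  also have "\<dots> \<le> real (card {e \<in> snd (delete_set G R). S \<subseteq> e}) + \<epsilon> / 2 * real ((n - d) choose (k - d))"
    using binomial_shift_le[of d k n "card R" \<epsilon>] assms unfolding n_def by simp
  finally have "(\<delta> + \<epsilon> / 2) * real ((n - d) choose (k - d)) \<le> real (card {e \<in> snd (delete_set G R). S \<subseteq> e})"
    by (simp add: algebra_simps)
  moreover have "(\<delta> + \<epsilon> / 2) * real (card (fst (delete_set G R)) - d choose (k - d))
      \<le> (\<delta> + \<epsilon> / 2) * real ((n - d) choose (k - d))"
    using \<open>card (fst (delete_set G R)) = n - card R\<close> assms(6,7)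
    by (intro mult_left_mono) (simp_all add: binomial_right_mono)
  ultimately show "(\<delta> + \<epsilon> / 2) * real (card (fst (delete_set G R)) - d choose (k - d))
      \<le> real (card {e \<in> snd (delete_set G R). S \<subseteq> e})"
    by linarith
qed

lemma subset_in_edge_if_d_sets_covered:
  assumes covered: "\<forall>S. S \<subseteq> V \<and> card S = d \<longrightarrow> (\<exists>e\<in>E. S \<subseteq> e)"
    and "finite V" "T \<subseteq> V" "card T \<le> d" "d \<le> card V"
  shows "\<exists>e\<in>E. T \<subseteq> e"
proof -
  have "finite T" using assms(2,3) finite_subset by blast
  then have "d - card T \<le> card (V - T)" using assms(3-5) by (simp add: card_Diff_subset)
  then obtain U where U: "U \<subseteq> V - T" "card U = d - card T" "finite U"
    by (rule obtain_subset_with_card_n)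
  have "card (T \<union> U) = d" using U \<open>finite T\<close> assms(4) by (subst card_Un_disjoint) auto
  moreover have "T \<union> U \<subseteq> V" using U assms(3) by auto
  ultimately show ?thesis using covered[rule_format, of "T \<union> U"] by blast
qed

text \<open>Exchange one vertex of A for one of B at a time: the l-set A and the new vertex b lie
  in a common edge, which is l-adjacent to the edge containing A.\<close>
lemma line_adj_rtrancl_if_small_sets_covered:
  assumes covered: "\<And>T. T \<subseteq> V \<Longrightarrow> card T \<le> Suc l \<Longrightarrow> \<exists>g\<in>E. T \<subseteq> g"
    and EV: "\<forall>g\<in>E. g \<subseteq> V" and fV: "finite V"
    and A: "A \<subseteq> e" "e \<in> E" "card A = l" and B: "B \<subseteq> f" "f \<in> E" "card B = l"
  shows "(e, f) \<in> (line_adj l E)\<^sup>*"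
  using A
proof (induction "card (A - B)" arbitrary: A e)
  case 0
  have "finite A" "finite B" "finite e"
    using 0 B EV fV by (meson finite_subset subset_trans)+
  then have "A = B" using 0 B by (metis Diff_eq_empty_iff card_0_eq card_subset_eq finite_Diff)
  then have "card A \<le> card (e \<inter> f)"
    using 0 B \<open>finite e\<close> by (intro card_mono) auto
  then have "(e, f) \<in> line_adj l E" using 0 B by (simp add: line_adj_def)
  then show ?case by blast
next
  case (Suc n)
  have fA: "finite A" and fe: "finite e" and fB: "finite B"
    using Suc.prems B EV fV by (meson finite_subset subset_trans)+
  obtain a where a: "a \<in> A" "a \<notin> B"
    using Suc.hyps(2) fA by (metis Diff_eq_empty_iff card_0_eq finite_Diff nat.distinct(1) subsetI)
  obtain b where b: "b \<in> B" "b \<notin> A"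
    using a fA Suc.prems(3) B(3) by (metis card_subset_eq subsetI)
  define A' where "A' = insert b (A - {a})"
  have "0 < card A" using a fA by (auto simp: card_gt_0_iff)
  then have "card A' = l" using a b fA Suc.prems(3) unfolding A'_def by simp
  have "A' - B = (A - B) - {a}" unfolding A'_def using b by auto
  then have "n = card (A' - B)" using Suc.hyps(2) a by simp
  have "insert b A \<subseteq> V" "card (insert b A) \<le> Suc l"
    using Suc.prems B EV b fA by auto
  then obtain g where g: "g \<in> E" "insert b A \<subseteq> g" using covered by blast
  have "card A \<le> card (e \<inter> g)"
    using g Suc.prems fe by (intro card_mono) auto
  then have "(e, g) \<in> line_adj l E" using Suc.prems g by (simp add: line_adj_def)
  moreover have "(g, f) \<in> (line_adj l E)\<^sup>*"
    using Suc.hyps(1)[OF \<open>n = card (A' - B)\<close>] g \<open>card A' = l\<close> unfolding A'_def by blast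
  ultimately show ?case by (rule converse_rtrancl_into_rtrancl)
qed

lemma ell_connected_if_d_sets_covered:
  assumes kg: "kgraph k G" and "l \<le> k" "l < d" "d \<le> card (fst G)"
    and covered: "\<forall>S. S \<subseteq> fst G \<and> card S = d \<longrightarrow> (\<exists>e\<in>snd G. S \<subseteq> e)"
  shows "ell_connected l G"
  unfolding ell_connected_def
proof (intro conjI ballI)
  have fV: "finite (fst G)" and EV: "\<forall>e\<in>snd G. e \<subseteq> fst G"
    and card_edge: "\<And>e. e \<in> snd G \<Longrightarrow> card e = k"
    using kg by (auto simp: kgraph_def)
  have small: "\<exists>e\<in>snd G. T \<subseteq> e" if "T \<subseteq> fst G" "card T \<le> Suc l" for T
    using subset_in_edge_if_d_sets_covered[OF covered fV that(1)] that(2) assms(3,4) by simp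
  show "\<exists>e\<in>snd G. v \<in> e" if "v \<in> fst G" for v
    using small[of "{v}"] that by simp
  show "(e, f) \<in> (line_adj l (snd G))\<^sup>*" if e: "e \<in> snd G" and f: "f \<in> snd G" for e f
  proof -
    obtain A where "A \<subseteq> e" "card A = l"
      using obtain_subset_with_card_n[of l e] card_edge[OF e] \<open>l \<le> k\<close> by auto
    moreover obtain B where "B \<subseteq> f" "card B = l"
      using obtain_subset_with_card_n[of l f] card_edge[OF f] \<open>l \<le> k\<close> by auto
    ultimately show ?thesis
      using line_adj_rtrancl_if_small_sets_covered[OF small EV fV _ e _ _ f] by simp
  qed
qed

lemma sym_line_adj: "sym (line_adj l E)"
  by (auto simp: sym_def line_adj_def Int_commute)

lemma line_adj_rtrancl_mono: "E \<subseteq> E' \<Longrightarrow> (line_adj l E)\<^sup>* \<subseteq> (line_adj l E')\<^sup>*"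
  by (rule rtrancl_mono) (auto simp: line_adj_def)

lemma ell_connected_union:
  assumes conn: "ell_connected l G" "ell_connected l H"
    and e: "e \<in> snd G" and f: "f \<in> snd H" and "l \<le> card (e \<inter> f)"
  shows "ell_connected l (graph_union G H)"
proof -
  let ?R = "(line_adj l (snd G \<union> snd H))\<^sup>*"
  have reach: "(a, e) \<in> ?R" if "a \<in> snd G \<union> snd H" for a
  proof (cases "a \<in> snd G")
    case True
    then show ?thesis
      using conn(1) e line_adj_rtrancl_mono[of "snd G" "snd G \<union> snd H" l]
      unfolding ell_connected_def by blast
  next
    case False
    then have "(a, f) \<in> ?R"
      using that conn(2) f line_adj_rtrancl_mono[of "snd H" "snd G \<union> snd H" l]
      unfolding ell_connected_def by blast
    moreover have "(f, e) \<in> line_adj l (snd G \<union> snd H)"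
      using e f \<open>l \<le> card (e \<inter> f)\<close> by (simp add: line_adj_def Int_commute)
    ultimately show ?thesis by (rule rtrancl_into_rtrancl)
  qed
  have "(a, b) \<in> ?R" if "a \<in> snd G \<union> snd H" "b \<in> snd G \<union> snd H" for a b
  proof -
    have "(e, b) \<in> ?R" using symD[OF sym_rtrancl[OF sym_line_adj] reach[OF that(2)]] .
    with reach[OF that(1)] show ?thesis by (rule rtrancl_trans)
  qed
  moreover have "\<exists>e\<in>snd G \<union> snd H. v \<in> e" if "v \<in> fst G \<union> fst H" for v
    using that conn unfolding ell_connected_def by blast
  ultimately show ?thesis by (simp add: ell_connected_def graph_union_def)
qed

text \<open>Unlike \<open>perfect_frac_tiling\<close>, the cycles may map into a larger graph G while covering only U,
  and the bound \<open>\<omega> \<le> 1\<close> is dropped: it follows from the vertex equations.\<close>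
definition frac_tiling_on :: "nat \<Rightarrow> nat \<Rightarrow> 'a hgraph \<Rightarrow> 'a set \<Rightarrow> (nat \<times> 'a list \<Rightarrow> real) \<Rightarrow> bool" where
  "frac_tiling_on k l G U \<omega> \<longleftrightarrow>
     finite {\<phi>. \<omega> \<phi> \<noteq> 0} \<and>
     (\<forall>\<phi>. \<omega> \<phi> \<noteq> 0 \<longrightarrow> cyc_hom k l G \<phi> \<and> set (snd \<phi>) \<subseteq> U) \<and>
     (\<forall>\<phi>. 0 \<le> \<omega> \<phi>) \<and>
     (\<forall>v\<in>U. (\<Sum>\<phi> | \<omega> \<phi> \<noteq> 0. \<omega> \<phi> * real (preimage_size \<phi> v)) = 1)"

lemma frac_tiling_onD:
  assumes "frac_tiling_on k l G U \<omega>"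
  shows "finite {\<phi>. \<omega> \<phi> \<noteq> 0}" and "\<omega> \<phi> \<noteq> 0 \<Longrightarrow> cyc_hom k l G \<phi>"
    and "\<omega> \<phi> \<noteq> 0 \<Longrightarrow> set (snd \<phi>) \<subseteq> U" and "0 \<le> \<omega> \<phi>"
    and "v \<in> U \<Longrightarrow> (\<Sum>\<phi> | \<omega> \<phi> \<noteq> 0. \<omega> \<phi> * real (preimage_size \<phi> v)) = 1"
  using assms unfolding frac_tiling_on_def by blast+

lemma frac_tiling_onI:
  assumes "finite {\<phi>. \<omega> \<phi> \<noteq> 0}" and "\<And>\<phi>. \<omega> \<phi> \<noteq> 0 \<Longrightarrow> cyc_hom k l G \<phi>"
    and "\<And>\<phi>. \<omega> \<phi> \<noteq> 0 \<Longrightarrow> set (snd \<phi>) \<subseteq> U" and "\<And>\<phi>. 0 \<le> \<omega> \<phi>"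
    and "\<And>v. v \<in> U \<Longrightarrow> (\<Sum>\<phi> | \<omega> \<phi> \<noteq> 0. \<omega> \<phi> * real (preimage_size \<phi> v)) = 1"
  shows "frac_tiling_on k l G U \<omega>"
  using assms unfolding frac_tiling_on_def by blast

lemma preimage_size_eq_0: "v \<notin> set (snd \<phi>) \<Longrightarrow> preimage_size \<phi> v = 0"
  by (auto simp: preimage_size_def)

lemma preimage_size_pos: "v \<in> set (snd \<phi>) \<Longrightarrow> 0 < preimage_size \<phi> v"
  by (auto simp: preimage_size_def card_gt_0_iff in_set_conv_nth)

lemma cyc_hom_nonempty:
  assumes "cyc_hom k l G \<phi>" "l < k"
  shows "snd \<phi> \<noteq> []"
proof -
  obtain m xs where \<phi>: "\<phi> = (m, xs)" by fastforce
  then have "cyc_ok k l m" "length xs = m * (k - l)" using assms(1) by (simp_all add: cyc_hom_def)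
  moreover from \<open>cyc_ok k l m\<close> have "2 \<le> m" by (simp add: cyc_ok_def)
  ultimately show ?thesis using \<phi> \<open>l < k\<close> by auto
qed

lemma frac_tiling_on_if_perfect_frac_tiling:
  assumes "perfect_frac_tiling k l H" "fst H \<subseteq> fst G" "snd H \<subseteq> snd G"
  shows "\<exists>\<omega>. frac_tiling_on k l G (fst H) \<omega>"
proof -
  obtain \<omega> where \<omega>: "finite {\<phi>. \<omega> \<phi> \<noteq> 0}" "\<forall>\<phi>. \<omega> \<phi> \<noteq> 0 \<longrightarrow> cyc_hom k l H \<phi>"
    "\<forall>\<phi>. 0 \<le> \<omega> \<phi>" "\<forall>v\<in>fst H. (\<Sum>\<phi> | \<omega> \<phi> \<noteq> 0. \<omega> \<phi> * real (preimage_size \<phi> v)) = 1"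
    using assms(1) unfolding perfect_frac_tiling_def by blast
  have "cyc_hom k l G \<phi> \<and> set (snd \<phi>) \<subseteq> fst H" if "cyc_hom k l H \<phi>" for \<phi>
    using that assms(2,3) by (cases \<phi>) (auto simp: cyc_hom_def)
  then have "frac_tiling_on k l G (fst H) \<omega>"
    using \<omega> by (intro frac_tiling_onI) blast+
  then show ?thesis by blast
qed

lemma frac_tiling_on_vertex_sum:
  assumes \<omega>: "frac_tiling_on k l G U \<omega>" and X: "finite X" "{\<phi>. \<omega> \<phi> \<noteq> 0} \<subseteq> X"
  shows "(\<Sum>\<phi>\<in>X. \<omega> \<phi> * real (preimage_size \<phi> v)) = (if v \<in> U then 1 else 0)"
proof -
  have "(\<Sum>\<phi>\<in>X. \<omega> \<phi> * real (preimage_size \<phi> v)) = (\<Sum>\<phi> | \<omega> \<phi> \<noteq> 0. \<omega> \<phi> * real (preimage_size \<phi> v))"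
    by (rule sum.mono_neutral_right[OF X(1,2)]) auto
  also have "\<dots> = (if v \<in> U then 1 else 0)"
  proof (cases "v \<in> U")
    case False
    then have "preimage_size \<phi> v = 0" if "\<omega> \<phi> \<noteq> 0" for \<phi>
      using frac_tiling_onD(3)[OF \<omega> that] by (auto intro: preimage_size_eq_0)
    then show ?thesis using False by simp
  qed (simp add: frac_tiling_onD(5)[OF \<omega>])
  finally show ?thesis .
qed

lemma perfect_frac_tiling_if_frac_tiling_on:
  assumes "l < k" and \<omega>: "frac_tiling_on k l G (fst G) \<omega>"
  shows "perfect_frac_tiling k l G"
proof -
  have bound: "\<omega> \<phi> \<le> 1" if "\<omega> \<phi> \<noteq> 0" for \<phi>
  proof -
    have "snd \<phi> \<noteq> []" using cyc_hom_nonempty[OF frac_tiling_onD(2)[OF \<omega> that] \<open>l < k\<close>] .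
    then obtain v where v: "v \<in> set (snd \<phi>)" by (meson list.set_sel(1))
    then have "v \<in> fst G" using frac_tiling_onD(3)[OF \<omega> that] by blast
    have "1 \<le> real (preimage_size \<phi> v)" using preimage_size_pos[OF v] by linarith
    from mult_left_mono[OF this frac_tiling_onD(4)[OF \<omega>]]
    have "\<omega> \<phi> \<le> \<omega> \<phi> * real (preimage_size \<phi> v)" by simp
    also have "\<dots> \<le> (\<Sum>\<psi> | \<omega> \<psi> \<noteq> 0. \<omega> \<psi> * real (preimage_size \<psi> v))"
      by (rule member_le_sum) (use that frac_tiling_onD(1,4)[OF \<omega>] in auto)
    also have "\<dots> = 1" using frac_tiling_onD(5)[OF \<omega> \<open>v \<in> fst G\<close>] .
    finally show ?thesis .
  qed
  show ?thesis
    unfolding perfect_frac_tiling_def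
  proof (intro exI[of _ \<omega>] conjI allI impI ballI)
    fix \<phi>
    show "0 \<le> \<omega> \<phi>" by (rule frac_tiling_onD(4)[OF \<omega>])
    show "\<omega> \<phi> \<le> 1" using bound by (cases "\<omega> \<phi> = 0") simp_all
  qed (use frac_tiling_onD(1,2,5)[OF \<omega>] in simp_all)
qed

lemma frac_tiling_on_average:
  fixes RR :: "'a set set" and W :: "'a set \<Rightarrow> nat \<times> 'a list \<Rightarrow> real"
  assumes "finite RR" "0 < c"
    and avoid: "\<And>v. v \<in> fst G \<Longrightarrow> card {R \<in> RR. v \<notin> R} = c"
    and W: "\<And>R. R \<in> RR \<Longrightarrow> frac_tiling_on k l G (fst G - R) (W R)"
  shows "frac_tiling_on k l G (fst G) (\<lambda>\<phi>. (\<Sum>R\<in>RR. W R \<phi>) / real c)"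
    (is "frac_tiling_on k l G (fst G) ?\<omega>")
proof -
  define X where "X = (\<Union>R\<in>RR. {\<phi>. W R \<phi> \<noteq> 0})"
  have "finite X" using frac_tiling_onD(1)[OF W] \<open>finite RR\<close> by (auto simp: X_def)
  have inner: "(\<Sum>\<phi>\<in>X. W R \<phi> * real (preimage_size \<phi> v)) = (if v \<in> fst G - R then 1 else 0)"
    if "R \<in> RR" for R v
    by (rule frac_tiling_on_vertex_sum[OF W[OF that] \<open>finite X\<close>]) (use that in \<open>auto simp: X_def\<close>)
  have supp: "\<exists>R\<in>RR. W R \<phi> \<noteq> 0" if "?\<omega> \<phi> \<noteq> 0" for \<phi>
  proof (rule ccontr)
    assume "\<not> (\<exists>R\<in>RR. W R \<phi> \<noteq> 0)"
    then have "(\<Sum>R\<in>RR. W R \<phi>) = 0" by (simp add: sum.neutral)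
    with that show False by simp
  qed
  then have "{\<phi>. ?\<omega> \<phi> \<noteq> 0} \<subseteq> X" by (auto simp: X_def)
  show ?thesis
  proof (rule frac_tiling_onI)
    show "finite {\<phi>. ?\<omega> \<phi> \<noteq> 0}"
      using \<open>finite X\<close> \<open>{\<phi>. ?\<omega> \<phi> \<noteq> 0} \<subseteq> X\<close> by (rule finite_subset[rotated])
    show "cyc_hom k l G \<phi>" "set (snd \<phi>) \<subseteq> fst G" if "?\<omega> \<phi> \<noteq> 0" for \<phi>
      using supp[OF that] frac_tiling_onD(2,3)[OF W] by blast+
    show "0 \<le> ?\<omega> \<phi>" for \<phi>
      using frac_tiling_onD(4)[OF W] by (simp add: sum_nonneg)
    fix v assume "v \<in> fst G"
    have "(\<Sum>\<phi> | ?\<omega> \<phi> \<noteq> 0. ?\<omega> \<phi> * real (preimage_size \<phi> v))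
        = (\<Sum>\<phi>\<in>X. ?\<omega> \<phi> * real (preimage_size \<phi> v))"
      by (rule sum.mono_neutral_left[OF \<open>finite X\<close> \<open>{\<phi>. ?\<omega> \<phi> \<noteq> 0} \<subseteq> X\<close>]) auto
    also have "\<dots> = (\<Sum>R\<in>RR. \<Sum>\<phi>\<in>X. W R \<phi> * real (preimage_size \<phi> v)) / real c"
      by (simp add: sum_divide_distrib sum_distrib_right sum.swap[of _ X])
    also have "\<dots> = (\<Sum>R\<in>RR. if v \<in> fst G - R then 1 else 0) / real c"
      by (simp add: inner)
    also have "\<dots> = real (card {R \<in> RR. v \<notin> R}) / real c"
      using \<open>v \<in> fst G\<close> \<open>finite RR\<close> by (simp add: sum.If_cases Int_def)
    finally show "(\<Sum>\<phi> | ?\<omega> \<phi> \<noteq> 0. ?\<omega> \<phi> * real (preimage_size \<phi> v)) = 1"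
      using avoid[OF \<open>v \<in> fst G\<close>] \<open>0 < c\<close> by simp
  qed
qed

lemma hf_family_d_sets_covered:
  assumes G: "G \<in> hf_family d k l \<delta> n0" and "0 < \<delta>" "k \<le> card (fst G)" "d \<le> k"
  shows "\<forall>S. S \<subseteq> fst G \<and> card S = d \<longrightarrow> (\<exists>e\<in>snd G. S \<subseteq> e)"
proof (intro allI impI)
  fix S assume S: "S \<subseteq> fst G \<and> card S = d"
  have "0 < \<delta> * real ((card (fst G) - d) choose (k - d))"
    using assms by (simp add: zero_less_binomial)
  also have "\<dots> \<le> real (card {e \<in> snd G. S \<subseteq> e})"
    using G S unfolding hf_family_def min_codeg_ge_def by blast
  finally have "{e \<in> snd G. S \<subseteq> e} \<noteq> {}" by (metis card.empty of_nat_0 less_irrefl)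
  then show "\<exists>e\<in>snd G. S \<subseteq> e" by blast
qed

lemma ell_connected_if_hf_family:
  assumes G: "G \<in> hf_family d k l \<delta> n0" and "0 < \<delta>" "k \<le> card (fst G)" "l < d" "d \<le> k"
  shows "ell_connected l G"
proof (rule ell_connected_if_d_sets_covered)
  show "kgraph k G" using G by (simp add: hf_family_def)
  show "\<forall>S. S \<subseteq> fst G \<and> card S = d \<longrightarrow> (\<exists>e\<in>snd G. S \<subseteq> e)"
    using hf_family_d_sets_covered[OF G] assms(2-5) by simp
qed (use assms in auto)

lemma ell_connected_union_delete_vertex:
  assumes H: "kgraph k H" and "0 < \<delta>" "l < d" "d \<le> k" "k < N"
    and Hx: "delete_vertex H x \<in> hf_family d k l \<delta> N"
    and Hy: "delete_vertex H y \<in> hf_family d k l \<delta> N"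
  shows "ell_connected l (graph_union (delete_vertex H x) (delete_vertex H y))"
proof -
  have "finite (fst H)" using H by (simp add: kgraph_def)
  have cx: "N \<le> card (fst H - {x})" and cy: "N \<le> card (fst H - {y})"
    using Hx Hy unfolding hf_family_def delete_vertex_def by simp_all
  have "card (fst H - {x}) - 1 \<le> card (fst H - {x} - {y})"
    using \<open>finite (fst H)\<close> by (simp add: card_Diff_singleton_if)
  then have "d \<le> card (fst H - {x} - {y})" using cx assms(4,5) by linarith
  then obtain S where S: "S \<subseteq> fst H - {x} - {y}" "card S = d" "finite S"
    by (rule obtain_subset_with_card_n)
  have kx: "k \<le> card (fst (delete_vertex H x))" and ky: "k \<le> card (fst (delete_vertex H y))"
    using cx cy assms(5) by (simp_all add: delete_vertex_def)
  have "S \<subseteq> fst (delete_vertex H x)" "S \<subseteq> fst (delete_vertex H y)"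
    using S by (auto simp: delete_vertex_def)
  then obtain e f where e: "e \<in> snd (delete_vertex H x)" "S \<subseteq> e"
    and f: "f \<in> snd (delete_vertex H y)" "S \<subseteq> f"
    using hf_family_d_sets_covered[OF Hx \<open>0 < \<delta>\<close> kx \<open>d \<le> k\<close>, rule_format, of S]
      hf_family_d_sets_covered[OF Hy \<open>0 < \<delta>\<close> ky \<open>d \<le> k\<close>, rule_format, of S] S(2)
    by blast
  have "e \<subseteq> fst H" using e(1) H by (auto simp: delete_vertex_def kgraph_def)
  then have "finite e" using \<open>finite (fst H)\<close> by (rule finite_subset)
  moreover have "S \<subseteq> e \<inter> f" using e f by blast
  ultimately have "l \<le> card (e \<inter> f)"
    using card_mono[of "e \<inter> f" S] S(2) \<open>l < d\<close> by simp
  then show ?thesis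
    by (rule ell_connected_union[OF ell_connected_if_hf_family[OF Hx \<open>0 < \<delta>\<close> kx \<open>l < d\<close> \<open>d \<le> k\<close>]
          ell_connected_if_hf_family[OF Hy \<open>0 < \<delta>\<close> ky \<open>l < d\<close> \<open>d \<le> k\<close>] e(1) f(1)])
qed

lemma ell_component_self: "kgraph k G \<Longrightarrow> ell_connected l G \<Longrightarrow> ell_component l G G"
  by (auto simp: ell_component_def subgraph_def kgraph_def)

definition eventually_frac_tiling :: "nat \<Rightarrow> nat \<Rightarrow> nat \<Rightarrow> real \<Rightarrow> bool" where
  "eventually_frac_tiling d k l \<delta> \<longleftrightarrow>
     (\<exists>n0. \<forall>G :: nat hgraph. kgraph k G \<and> card (fst G) \<ge> n0 \<and>
        min_codeg_ge d G (\<delta> * real (card (fst G) - d choose (k - d))) \<longrightarrow>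
        perfect_frac_tiling k l G)"

definition eventually_hamilton_framework :: "nat \<Rightarrow> nat \<Rightarrow> nat \<Rightarrow> real \<Rightarrow> bool" where
  "eventually_hamilton_framework d k l \<delta> \<longleftrightarrow> (\<exists>n0. hamilton_framework k l (hf_family d k l \<delta> n0))"

lemma delta_frct_eq:
  "delta_frct d k l = Inf {\<delta>. 0 \<le> \<delta> \<and> \<delta> \<le> 1 \<and> (\<forall>\<epsilon>>0. eventually_frac_tiling d k l (\<delta> + \<epsilon>))}"
  by (simp add: delta_frct_def eventually_frac_tiling_def)

lemma delta_hf_eq:
  "delta_hf d k l = Inf {\<delta>. 0 \<le> \<delta> \<and> \<delta> \<le> 1 \<and> (\<forall>\<epsilon>>0. eventually_hamilton_framework d k l (\<delta> + \<epsilon>))}"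
  by (simp add: delta_hf_def eventually_hamilton_framework_def)

lemma eventually_hamilton_framework_if_frac_tiling:
  assumes "l < d" "d < k" "0 < \<delta>" and "eventually_frac_tiling d k l \<delta>"
  shows "eventually_hamilton_framework d k l \<delta>"
proof -
  obtain n0 where tiling: "\<And>G :: nat hgraph. kgraph k G \<Longrightarrow> n0 \<le> card (fst G) \<Longrightarrow>
      min_codeg_ge d G (\<delta> * real (card (fst G) - d choose (k - d))) \<Longrightarrow> perfect_frac_tiling k l G"
    using assms(4) unfolding eventually_frac_tiling_def by blast
  let ?\<G> = "hf_family d k l \<delta> (n0 + k + 1)"
  have "hamilton_framework k l ?\<G>"
    unfolding hamilton_framework_def
  proof (intro exI[of _ "\<lambda>G. G"] conjI ballI allI impI)
    fix G assume G: "G \<in> ?\<G>"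
    then have kg: "kgraph k G" and "n0 + k + 1 \<le> card (fst G)"
      and "min_codeg_ge d G (\<delta> * real (card (fst G) - d choose (k - d)))"
      by (simp_all add: hf_family_def)
    then show "perfect_frac_tiling k l G" using tiling by simp
    have "ell_connected l G"
      using ell_connected_if_hf_family[OF G] \<open>n0 + k + 1 \<le> card (fst G)\<close> assms(1-3) by simp
    with kg show "ell_component l G G" by (rule ell_component_self)
  next
    fix H :: "nat hgraph" and x y
    assume "kgraph k H \<and> x \<in> fst H \<and> y \<in> fst H \<and> delete_vertex H x \<in> ?\<G> \<and> delete_vertex H y \<in> ?\<G>"
    then show "ell_connected l (graph_union (delete_vertex H x) (delete_vertex H y))"
      using ell_connected_union_delete_vertex[of k H \<delta> l d "n0 + k + 1" x y] assms(1-3) by simp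
  qed simp_all
  then show ?thesis unfolding eventually_hamilton_framework_def by blast
qed

lemma delete_set_in_hf_family:
  fixes \<delta> \<epsilon> :: real
  assumes kg: "kgraph k G" and R: "R \<subseteq> fst G" "card R = card (fst G) mod (k - l)"
    and "l < k" "d < k" "0 \<le> \<delta>" "0 < \<epsilon>" "n0 + k \<le> card (fst G)"
    and big: "2 * real k ^ 2 \<le> \<epsilon> * real (card (fst G) - d)"
    and mc: "min_codeg_ge d G ((\<delta> + \<epsilon>) * real (card (fst G) - d choose (k - d)))"
  shows "delete_set G R \<in> hf_family d k l (\<delta> + \<epsilon> / 2) n0"
proof -
  have "finite R" using R(1) kg finite_subset by (auto simp: kgraph_def)
  then have card_del: "card (fst (delete_set G R)) = card (fst G) - card (fst G) mod (k - l)"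
    using R by (simp add: delete_set_def card_Diff_subset)
  have "card R < k - l" using R(2) \<open>l < k\<close> by simp
  then have "card R < k" by linarith
  show ?thesis
    unfolding hf_family_def mem_Collect_eq
  proof (intro conjI)
    show "kgraph k (delete_set G R)" using kg by (rule kgraph_delete_set)
    show "n0 \<le> card (fst (delete_set G R))"
      using card_del \<open>card R < k\<close> R(2) assms(8) by linarith
    show "(k - l) dvd card (fst (delete_set G R))"
      unfolding card_del by (simp add: minus_mod_eq_mult_div)
    show "min_codeg_ge d (delete_set G R) ((\<delta> + \<epsilon> / 2) * real (card (fst (delete_set G R)) - d choose (k - d)))"
      using assms(5,6,8) by (intro min_codeg_delete_set[OF kg R(1) \<open>card R < k\<close> _ _ _ \<open>0 < \<epsilon>\<close> big mc]) auto
  qed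
qed

lemma card_avoiding_subsets:
  assumes "finite V" "v \<in> V"
  shows "card {R. R \<subseteq> V \<and> card R = r \<and> v \<notin> R} = (card V - 1) choose r"
proof -
  have "{R. R \<subseteq> V \<and> card R = r \<and> v \<notin> R} = {R. R \<subseteq> V - {v} \<and> card R = r}" by auto
  then show ?thesis using assms by (simp add: n_subsets)
qed

lemma perfect_frac_tiling_if_deletions_tiled:
  assumes "finite (fst G)" "l < k" "r < card (fst G)"
    and tiled: "\<And>R. R \<subseteq> fst G \<Longrightarrow> card R = r \<Longrightarrow>
      \<exists>H. perfect_frac_tiling k l H \<and> fst H = fst G - R \<and> snd H \<subseteq> snd G"
  shows "perfect_frac_tiling k l G"
proof -
  define RR where "RR = {R. R \<subseteq> fst G \<and> card R = r}"
  have "\<exists>W. frac_tiling_on k l G (fst G - R) W" if "R \<in> RR" for R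
  proof -
    have "R \<subseteq> fst G" "card R = r" using that unfolding RR_def by simp_all
    from tiled[OF this] obtain H
      where H: "perfect_frac_tiling k l H" "fst H = fst G - R" "snd H \<subseteq> snd G"
      by blast
    then have "fst H \<subseteq> fst G" by blast
    from frac_tiling_on_if_perfect_frac_tiling[OF H(1) this H(3)] show ?thesis
      unfolding H(2) .
  qed
  then obtain W where W: "\<And>R. R \<in> RR \<Longrightarrow> frac_tiling_on k l G (fst G - R) (W R)"
    by metis
  have avoid: "card {R \<in> RR. v \<notin> R} = (card (fst G) - 1) choose r" if "v \<in> fst G" for v
    using card_avoiding_subsets[OF \<open>finite (fst G)\<close> that] unfolding RR_def by simp
  have "0 < (card (fst G) - 1) choose r" using \<open>r < card (fst G)\<close> by simp
  moreover have "finite RR" using \<open>finite (fst G)\<close> by (simp add: RR_def)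
  ultimately have "frac_tiling_on k l G (fst G) (\<lambda>\<phi>. (\<Sum>R\<in>RR. W R \<phi>) / real ((card (fst G) - 1) choose r))"
    using frac_tiling_on_average[OF _ _ avoid W] by blast
  with \<open>l < k\<close> show ?thesis by (rule perfect_frac_tiling_if_frac_tiling_on)
qed

lemma eventually_frac_tiling_if_hamilton_framework:
  fixes \<delta> \<epsilon> :: real
  assumes "l < d" "d < k" "0 \<le> \<delta>" "0 < \<epsilon>"
    and "eventually_hamilton_framework d k l (\<delta> + \<epsilon> / 2)"
  shows "eventually_frac_tiling d k l (\<delta> + \<epsilon>)"
proof -
  obtain n0 and F :: "nat hgraph \<Rightarrow> nat hgraph"
    where F: "\<And>G. G \<in> hf_family d k l (\<delta> + \<epsilon> / 2) n0 \<Longrightarrow>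
      fst (F G) = fst G \<and> snd (F G) \<subseteq> snd G \<and> perfect_frac_tiling k l (F G)"
    using assms(5) unfolding eventually_hamilton_framework_def hamilton_framework_def by blast
  \<comment> \<open>large enough that deleting fewer than k vertices costs at most \<open>\<epsilon>/2\<close> of the codegree\<close>
  define N where "N = n0 + k + nat \<lceil>2 * real k ^ 2 / \<epsilon>\<rceil>"
  have "perfect_frac_tiling k l G"
    if kg: "kgraph k G" and "N \<le> card (fst G)"
      and mc: "min_codeg_ge d G ((\<delta> + \<epsilon>) * real (card (fst G) - d choose (k - d)))"
    for G :: "nat hgraph"
  proof (rule perfect_frac_tiling_if_deletions_tiled)
    show "finite (fst G)" using kg by (simp add: kgraph_def)
    show "l < k" using assms(1,2) by simp
    have "card (fst G) mod (k - l) < k - l" using assms(1,2) by simp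
    then show "card (fst G) mod (k - l) < card (fst G)"
      using \<open>N \<le> card (fst G)\<close> unfolding N_def by linarith
    have "2 * real k ^ 2 / \<epsilon> \<le> real (card (fst G) - d)"
      using \<open>N \<le> card (fst G)\<close> \<open>d < k\<close> real_nat_ceiling_ge[of "2 * real k ^ 2 / \<epsilon>"]
      unfolding N_def by linarith
    then have big: "2 * real k ^ 2 \<le> \<epsilon> * real (card (fst G) - d)"
      using \<open>0 < \<epsilon>\<close> by (simp add: divide_le_eq mult.commute)
    fix R assume R: "R \<subseteq> fst G" "card R = card (fst G) mod (k - l)"
    have "delete_set G R \<in> hf_family d k l (\<delta> + \<epsilon> / 2) n0"
      using \<open>N \<le> card (fst G)\<close> assms(1-4) unfolding N_def
      by (intro delete_set_in_hf_family[OF kg R _ _ _ _ _ big mc]) auto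
    from F[OF this] show "\<exists>H. perfect_frac_tiling k l H \<and> fst H = fst G - R \<and> snd H \<subseteq> snd G"
      by (intro exI[of _ "F (delete_set G R)"]) (auto simp: delete_set_def)
  qed
  then show ?thesis unfolding eventually_frac_tiling_def by blast
qed

theorem proposition2p10:
  fixes d k l :: nat
  assumes "1 \<le> l" and "l < d" and "d \<le> k - 1"
    and "\<not> (k - l) dvd k"
  shows "delta_hf d k l = delta_frct d k l"
proof -
  have "d < k" using assms(2,3) by linarith
  have "(\<forall>\<epsilon>>0. eventually_hamilton_framework d k l (\<delta> + \<epsilon>))
      \<longleftrightarrow> (\<forall>\<epsilon>>0. eventually_frac_tiling d k l (\<delta> + \<epsilon>))" if "0 \<le> \<delta>" for \<delta> :: real
  proof (intro iffI allI impI)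
    fix \<epsilon> :: real assume "0 < \<epsilon>"
    show "eventually_frac_tiling d k l (\<delta> + \<epsilon>)"
      if "\<forall>\<epsilon>>0. eventually_hamilton_framework d k l (\<delta> + \<epsilon>)"
      using eventually_frac_tiling_if_hamilton_framework[OF \<open>l < d\<close> \<open>d < k\<close> \<open>0 \<le> \<delta>\<close> \<open>0 < \<epsilon>\<close>] that \<open>0 < \<epsilon>\<close>
      by simp
    show "eventually_hamilton_framework d k l (\<delta> + \<epsilon>)"
      if "\<forall>\<epsilon>>0. eventually_frac_tiling d k l (\<delta> + \<epsilon>)"
      using eventually_hamilton_framework_if_frac_tiling[OF \<open>l < d\<close> \<open>d < k\<close>] that \<open>0 \<le> \<delta>\<close> \<open>0 < \<epsilon>\<close>
      by simp
  qed
  then show ?thesis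
    unfolding delta_hf_eq delta_frct_eq by (intro arg_cong[where f = Inf] Collect_cong) blast
qed

end
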